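(* Let $p,q$ be squarefree positive integers such that $K=\mathbb{Q}(\sqrt p,\sqrt q)$ has degree $4$ over $\mathbb{Q}$, and let $r=\frac{pq}{\gcd(p,q)^2}$. Assume that $\alpha$ is a totally positive element of $\mathcal{O}_K$ satisfying $N(\alpha)<2\min(\sqrt p,\sqrt q,\sqrt r)$, where $N$ is the norm from $K$ to $\mathbb{Q}$, and such that $n\nmid\alpha$ in $\mathcal{O}_K$ for every integer $n>1$. Then $\alpha$ is indecomposable.
   Context: An element of $K$ is totally positive if all its images under the real embeddings of $K$ are positive. A totally positive $\alpha\in\mathcal{O}_K$ is (additively) indecomposable if it cannot be written as $\alpha=\beta+\gamma$ with $\beta,\gamma$ totally positive elements of $\mathcal{O}_K$. *)

theory Defs
  imports "HOL-Computational_Algebra.Computational_Algebra"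
begin

definition biquad_field :: "nat \<Rightarrow> nat \<Rightarrow> real set" where
  "biquad_field p q =
     {of_rat a + of_rat b * sqrt (real p) + of_rat c * sqrt (real q)
        + of_rat d * sqrt (real p * real q) | a b c d. True}"

definition ring_of_integers :: "nat \<Rightarrow> nat \<Rightarrow> real set" where
  "ring_of_integers p q = {x \<in> biquad_field p q. algebraic_int x}"

text \<open>Real embeddings of K: ring homomorphisms K \<rightarrow> R (made extensional by
  sending elements outside K to 0).\<close>
definition real_embeddings :: "nat \<Rightarrow> nat \<Rightarrow> (real \<Rightarrow> real) set" where
  "real_embeddings p q =
     {\<sigma>. (\<forall>x\<in>biquad_field p q. \<forall>y\<in>biquad_field p q.
            \<sigma> (x + y) = \<sigma> x + \<sigma> y \<and> \<sigma> (x * y) = \<sigma> x * \<sigma> y)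
         \<and> \<sigma> 1 = 1
         \<and> (\<forall>x. x \<notin> biquad_field p q \<longrightarrow> \<sigma> x = 0)}"

definition totally_positive :: "nat \<Rightarrow> nat \<Rightarrow> real \<Rightarrow> bool" where
  "totally_positive p q x \<longleftrightarrow>
     x \<in> biquad_field p q \<and> (\<forall>\<sigma>\<in>real_embeddings p q. \<sigma> x > 0)"

definition field_norm :: "nat \<Rightarrow> nat \<Rightarrow> real \<Rightarrow> real" where
  "field_norm p q x = (\<Prod>\<sigma>\<in>real_embeddings p q. \<sigma> x)"

definition indecomposable :: "nat \<Rightarrow> nat \<Rightarrow> real \<Rightarrow> bool" where
  "indecomposable p q \<alpha> \<longleftrightarrow>
     \<alpha> \<in> ring_of_integers p q \<and> totally_positive p q \<alpha> \<and>
     \<not> (\<exists>\<beta>\<in>ring_of_integers p q. \<exists>\<gamma>\<in>ring_of_integers p q.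
           totally_positive p q \<beta> \<and> totally_positive p q \<gamma> \<and> \<alpha> = \<beta> + \<gamma>)"

end

theory Submission
  imports Defs "Jordan_Normal_Form.Char_Poly"
begin

text \<open>Suppose \<open>\<alpha> = \<beta> + \<gamma>\<close> with \<open>\<beta>, \<gamma>\<close> totally positive integers, and write \<open>b\<^sub>i, c\<^sub>i\<close>
  for their images under the four automorphisms of \<open>K\<close>. Expanding
  \<open>N(\<alpha>) = \<Prod>\<^sub>i (b\<^sub>i + c\<^sub>i)\<close> produces, among positive terms, three pairs \<open>z + z'\<close>
  where \<open>z\<close> is a totally positive integer of one of the quadratic subfields
  \<open>\<rat>(\<surd>p), \<rat>(\<surd>q), \<rat>(\<surd>r)\<close> and \<open>z'\<close> is its conjugate. Such a trace exceeds \<open>\<surd>m\<close> unless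
  \<open>z\<close> is rational, so at most one pair can be irrational. Two rational pairs make the ratios
  \<open>b\<^sub>i / c\<^sub>i\<close> equal in pairs; then a second product of conjugates either again has trace
  above \<open>\<surd>m\<close>, giving \<open>N(\<alpha>) > 4\<surd>m\<close>, or all four ratios agree. In the last case
  \<open>\<beta>/\<gamma>\<close> is rational, \<open>\<alpha>\<close> is a rational multiple \<open>(u/v) \<gamma>\<close> with \<open>u > v\<close>, and \<open>\<alpha>/u\<close> is
  an algebraic integer.\<close>

section \<open>Algebraic integers form a ring\<close>

inductive_set int_span :: "'a::comm_ring_1 set \<Rightarrow> 'a set" for M where
  zero: "0 \<in> int_span M"
| base: "m \<in> M \<Longrightarrow> m \<in> int_span M"
| add: "a \<in> int_span M \<Longrightarrow> b \<in> int_span M \<Longrightarrow> a + b \<in> int_span M"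
| uminus: "a \<in> int_span M \<Longrightarrow> - a \<in> int_span M"

lemma int_span_of_nat_mult: "a \<in> int_span M \<Longrightarrow> of_nat k * a \<in> int_span M"
  by (induction k) (auto simp: distrib_right intro: int_span.intros)

lemma int_span_of_int_mult:
  assumes "a \<in> int_span M" shows "of_int k * a \<in> int_span M"
proof (cases "k \<ge> 0")
  case True
  then show ?thesis using int_span_of_nat_mult[OF assms, of "nat k"] by simp
next
  case False
  then have "of_int k * a = - (of_nat (nat (- k)) * a)" by simp
  then show ?thesis using int_span_of_nat_mult[OF assms] int_span.uminus by metis
qed

lemma int_span_sum:
  "finite I \<Longrightarrow> (\<And>i. i \<in> I \<Longrightarrow> f i \<in> int_span M) \<Longrightarrow> sum f I \<in> int_span M"
  by (induction I rule: finite_induct) (auto intro: int_span.intros)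

lemma int_span_mult:
  assumes "\<And>a b. a \<in> A \<Longrightarrow> b \<in> B \<Longrightarrow> a * b \<in> int_span C"
    and "u \<in> int_span A" and "v \<in> int_span B"
  shows "u * v \<in> int_span C"
  using assms(2)
proof induction
  case (base a)
  show ?case using assms(3)
    by induction (auto simp: distrib_left intro: int_span.intros assms(1)[OF base])
qed (auto simp: distrib_right intro: int_span.intros)

lemma int_span_finite_repr:
  assumes "finite M" "a \<in> int_span M"
  shows "\<exists>c. a = (\<Sum>m\<in>M. of_int (c m) * m)"
  using assms(2)
proof induction
  case zero
  show ?case by (rule exI[of _ "\<lambda>_. 0"]) simp
next
  case (base m)
  have "(\<Sum>x\<in>M. of_int (if x = m then 1 else 0) * x) = (\<Sum>x\<in>M. if x = m then x else 0)"
    by (rule sum.cong) auto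
  also have "\<dots> = m" using base assms(1) by simp
  finally show ?case by metis
next
  case (add a b)
  then obtain c d where "a = (\<Sum>m\<in>M. of_int (c m) * m)" "b = (\<Sum>m\<in>M. of_int (d m) * m)"
    by blast
  then show ?case by (intro exI[of _ "\<lambda>m. c m + d m"]) (simp add: sum.distrib distrib_right)
next
  case (uminus a)
  then obtain c where "a = (\<Sum>m\<in>M. of_int (c m) * m)" by blast
  then show ?case by (intro exI[of _ "\<lambda>m. - c m"]) (simp add: sum_negf)
qed

text \<open>The matrix of multiplication by \<open>x\<close> on a finitely generated \<open>\<int>\<close>-module has
  \<open>x\<close> as an eigenvalue, so \<open>x\<close> is a root of its monic integer characteristic polynomial.\<close>
lemma algebraic_int_if_int_span_closed:
  fixes x :: "'a :: field_char_0"
  assumes "finite M" and "\<exists>m\<in>M. m \<noteq> 0" and "\<And>m. m \<in> M \<Longrightarrow> x * m \<in> int_span M"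
  shows "algebraic_int x"
proof -
  obtain vs where vs: "set vs = M" "distinct vs"
    using finite_distinct_list[OF assms(1)] by blast
  define n where "n = length vs"
  have "\<exists>c. x * vs ! i = (\<Sum>j<n. of_int (c j) * vs ! j)" if "i < n" for i
  proof -
    have "vs ! i \<in> M" using vs that by (auto simp: n_def)
    then obtain c where "x * vs ! i = (\<Sum>m\<in>M. of_int (c m) * m)"
      using int_span_finite_repr[OF assms(1) assms(3)] by blast
    also have "\<dots> = (\<Sum>j<n. of_int (c (vs ! j)) * vs ! j)"
      using vs sum_list_distinct_conv_sum_set[of vs "\<lambda>m. of_int (c m) * m"]
      by (simp add: n_def sum_list_sum_nth atLeast0LessThan)
    finally show ?thesis by (rule exI[where x = "\<lambda>j. c (vs ! j)"])
  qed
  then obtain C where C: "\<And>i. i < n \<Longrightarrow> x * vs ! i = (\<Sum>j<n. of_int (C i j) * vs ! j)"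
    by metis
  define B :: "int mat" where "B = mat n n (\<lambda>(i, j). C i j)"
  define v where "v = vec n (\<lambda>i. vs ! i)"
  have B: "B \<in> carrier_mat n n" by (simp add: B_def)
  have "map_mat of_int B *\<^sub>v v = x \<cdot>\<^sub>v v"
    by (rule eq_vecI) (simp_all add: B_def v_def C mult_mat_vec_def scalar_prod_def
        lessThan_atLeast0)
  moreover have "v \<noteq> 0\<^sub>v n"
    using assms(2) vs by (auto simp: v_def n_def in_set_conv_nth vec_eq_iff)
  ultimately have "eigenvector (map_mat of_int B) v x"
    using B unfolding eigenvector_def by (simp add: v_def)
  then have "eigenvalue (map_mat of_int B) x"
    unfolding eigenvalue_def by blast
  moreover have "map_mat of_int B \<in> carrier_mat n n" using B by simp
  ultimately have "poly (map_poly of_int (char_poly B)) x = 0"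
    using eigenvalue_root_char_poly of_int_hom.char_poly_hom[OF B] by metis
  moreover have "lead_coeff (char_poly B) = 1"
    using degree_monic_char_poly[OF B] by simp
  ultimately show ?thesis unfolding algebraic_int_altdef_ipoly by auto
qed

lemma algebraic_int_powers_in_int_span:
  assumes "algebraic_int x"
  obtains n where "n > 0" "\<And>N. x ^ N \<in> int_span {x ^ i | i. i < n}"
proof -
  from assms obtain P where P: "lead_coeff P = 1" "\<forall>i. coeff P i \<in> \<int>" "poly P x = 0"
    by (auto elim: algebraic_int.cases)
  define n where "n = degree P"
  have "n > 0"
  proof (rule ccontr)
    assume "\<not> n > 0"
    then have "degree P = 0" by (simp add: n_def)
    then have "poly P x = 1" using P(1) by (metis monic_degree_0 poly_1)
    with P(3) show False by simp
  qed
  have "\<forall>i. \<exists>z. coeff P i = of_int z" using P(2) by (auto elim: Ints_cases)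
  then obtain k where k: "\<And>i. coeff P i = of_int (k i)" by metis
  have top: "x ^ n = - (\<Sum>i<n. of_int (k i) * x ^ i)"
  proof -
    have "0 = (\<Sum>i\<le>n. coeff P i * x ^ i)" using P(3) by (simp add: poly_altdef n_def)
    also have "\<dots> = x ^ n + (\<Sum>i<n. of_int (k i) * x ^ i)"
      using P(1) by (simp add: lessThan_Suc_atMost[symmetric] n_def k[symmetric])
    finally show ?thesis by (simp add: eq_neg_iff_add_eq_0)
  qed
  have "x ^ N \<in> int_span {x ^ i | i. i < n}" for N
  proof (induction N rule: less_induct)
    case (less N)
    show ?case
    proof (cases "N < n")
      case False
      define d where "d = N - n"
      have N: "N = d + n" using False by (simp add: d_def)
      have "x ^ N = - (\<Sum>i<n. of_int (k i) * x ^ (d + i))"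
        by (simp add: N power_add top sum_distrib_left mult.left_commute)
      moreover have "d + i < N" if "i < n" for i using N that by linarith
      ultimately show ?thesis
        by (auto intro!: int_span.uminus int_span_sum int_span_of_int_mult less.IH)
    qed (auto intro: int_span.base)
  qed
  with \<open>n > 0\<close> show thesis by (rule that)
qed

lemma algebraic_int_add_mult:
  assumes "algebraic_int (x :: 'a :: field_char_0)" "algebraic_int y"
  shows algebraic_int_add: "algebraic_int (x + y)"
    and algebraic_int_mult: "algebraic_int (x * y)"
proof -
  obtain n where n: "n > 0" "\<And>N. x ^ N \<in> int_span {x ^ i | i. i < n}"
    using algebraic_int_powers_in_int_span[OF assms(1)] by blast
  obtain l where l: "l > 0" "\<And>L. y ^ L \<in> int_span {y ^ j | j. j < l}"
    using algebraic_int_powers_in_int_span[OF assms(2)] by blast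
  define M where "M = (\<lambda>(i, j). x ^ i * y ^ j) ` ({..<n} \<times> {..<l})"
  have monomial: "x ^ N * y ^ L \<in> int_span M" for N L
  proof (rule int_span_mult[OF _ n(2) l(2)])
    fix a b assume "a \<in> {x ^ i | i. i < n}" "b \<in> {y ^ j | j. j < l}"
    then obtain i j where "a * b = (\<lambda>(i, j). x ^ i * y ^ j) (i, j)"
      and "(i, j) \<in> {..<n} \<times> {..<l}" by auto
    then show "a * b \<in> int_span M" unfolding M_def by (metis imageI int_span.base)
  qed
  have "1 \<in> M"
    unfolding M_def using n l by (intro image_eqI[where x = "(0, 0)"]) simp_all
  then have M: "finite M" "\<exists>m\<in>M. m \<noteq> 0" by (auto simp: M_def)
  show "algebraic_int (x + y)"
  proof (rule algebraic_int_if_int_span_closed[OF M])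
    fix m assume "m \<in> M"
    then obtain i j where "m = x ^ i * y ^ j" by (auto simp: M_def)
    then have "(x + y) * m = x ^ Suc i * y ^ j + x ^ i * y ^ Suc j"
      by (simp add: distrib_right mult_ac)
    then show "(x + y) * m \<in> int_span M" by (metis monomial int_span.add)
  qed
  show "algebraic_int (x * y)"
  proof (rule algebraic_int_if_int_span_closed[OF M])
    fix m assume "m \<in> M"
    then obtain i j where "m = x ^ i * y ^ j" by (auto simp: M_def)
    then have "(x * y) * m = x ^ Suc i * y ^ Suc j" by (simp add: mult_ac)
    then show "(x * y) * m \<in> int_span M" by (metis monomial)
  qed
qed

section \<open>Traces in real quadratic fields\<close>

lemma squarefree_rat_square_int:
  fixes m :: nat and e :: rat
  assumes "squarefree m" and "e ^ 2 * of_nat m \<in> \<int>"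
  shows "e \<in> \<int>"
proof -
  obtain u v where uv: "quotient_of e = (u, v)" by (cases "quotient_of e")
  have v: "v > 0" "coprime u v" "e = of_int u / of_int v"
    using quotient_of_denom_pos[OF uv] quotient_of_coprime[OF uv] quotient_of_div[OF uv] by auto
  from assms(2) obtain k where "e ^ 2 * of_nat m = of_int k" by (auto elim: Ints_cases)
  then have "of_int (u ^ 2 * int m) = (of_int (k * v ^ 2) :: rat)"
    using v by (simp add: field_simps)
  then have "v ^ 2 dvd u ^ 2 * int m" by (simp only: of_int_eq_iff) simp
  then have "v ^ 2 dvd int m"
    using v(2) by (simp add: coprime_dvd_mult_right_iff coprime_commute)
  then have "(nat v) ^ 2 dvd m"
    using v(1) by (metis int_nat_eq of_nat_dvd_iff of_nat_power order_less_imp_le)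
  then have "nat v dvd 1" using assms(1) by (rule squarefreeD[rotated])
  then have "v = 1" using v(1) by simp
  then show ?thesis using v(3) by simp
qed

lemma of_rat_in_Ints_iff: "(of_rat x :: 'a :: field_char_0) \<in> \<int> \<longleftrightarrow> x \<in> \<int>"
  by (metis Ints_cases Ints_of_int of_rat_eq_iff of_rat_of_int_eq)

text \<open>The trace \<open>2X\<close> and norm \<open>X\<^sup>2 - m Y\<^sup>2\<close> are integers, which forces \<open>2Y \<in> \<int>\<close>
  because \<open>m\<close> is squarefree; then \<open>(z + z')\<^sup>2 = (2Y)\<^sup>2 m + 4 z z' > m\<close>.\<close>
lemma quadratic_trace_gt_sqrt:
  fixes m :: nat and X Y :: rat
  defines "z \<equiv> of_rat X + of_rat Y * sqrt (real m)"
    and "z' \<equiv> of_rat X - of_rat Y * sqrt (real m)"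
  assumes "squarefree m" and "Y \<noteq> 0"
    and "algebraic_int z" "algebraic_int z'" and "z > 0" "z' > 0"
  shows "sqrt (real m) < z + z'"
proof -
  have sum: "z + z' = of_rat (2 * X)" by (simp add: z_def z'_def of_rat_mult)
  have "z * z' = of_rat X ^ 2 - of_rat Y ^ 2 * sqrt (real m) ^ 2"
    by (simp add: z_def z'_def algebra_simps power2_eq_square)
  then have prod: "z * z' = of_rat (X ^ 2 - Y ^ 2 * of_nat m)"
    by (simp add: of_rat_diff of_rat_mult of_rat_power)
  have "z + z' \<in> \<int>" "z * z' \<in> \<int>"
    using assms(5,6) algebraic_int_add algebraic_int_mult
    by (auto intro!: rational_algebraic_int_is_int simp del: algebraic_int_of_real_iff,
        simp_all add: sum prod)
  then have ints: "2 * X \<in> \<int>" "X ^ 2 - Y ^ 2 * of_nat m \<in> \<int>"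
    by (simp_all only: sum prod of_rat_in_Ints_iff)
  have "(2 * Y) ^ 2 * of_nat m = (2 * X) ^ 2 - 4 * (X ^ 2 - Y ^ 2 * of_nat m)"
    by (simp add: algebra_simps power2_eq_square)
  also have "\<dots> \<in> \<int>" using ints by (metis Ints_diff Ints_mult Ints_power Ints_numeral)
  finally have "(2 * Y) ^ 2 * of_nat m \<in> \<int>" .
  then have "2 * Y \<in> \<int>" by (rule squarefree_rat_square_int[OF assms(3)])
  then obtain c where c: "2 * Y = of_int c" by (auto elim: Ints_cases)
  with assms(4) have "c ^ 2 > 0" by simp
  then have "1 \<le> c ^ 2" by linarith
  then have "(1 :: real) \<le> of_int (c ^ 2)" by (metis of_int_1_le_iff)
  then have "real m \<le> of_int (c ^ 2) * real m" by (simp add: mult_le_cancel_right1)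
  also have "of_int (c ^ 2) * real m = (z - z') ^ 2"
  proof -
    have "z - z' = of_rat (2 * Y) * sqrt (real m)" by (simp add: z_def z'_def of_rat_mult)
    then have "z - z' = of_int c * sqrt (real m)" by (simp add: c)
    then show ?thesis by (simp add: power_mult_distrib)
  qed
  also have "\<dots> < (z + z') ^ 2"
    using assms(7,8) by (simp add: power2_eq_square algebra_simps)
  finally show ?thesis using assms(7,8) by (simp add: real_less_lsqrt)
qed

section \<open>Products of sums of positive reals\<close>

lemma cross_products_eq_imp_eq:
  fixes P Q u v :: real
  assumes "0 < P" "0 < Q" "0 < u" "0 < v" and "P * u = Q * v" "P * v = Q * u"
  shows "P = Q \<and> u = v"
proof -
  have "P ^ 2 * (u * v) = Q ^ 2 * (u * v)"
    using assms(5,6) by (metis mult.commute mult.left_commute power2_eq_square)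
  then have "P = Q" using assms(1-4) by (simp add: power2_eq_iff_nonneg)
  then show ?thesis using assms(2,5) by simp
qed

lemma prod_sums_ge_six_cross_terms:
  fixes b0 b1 b2 b3 c0 c1 c2 c3 :: real
  assumes "b0 \<ge> 0" "b1 \<ge> 0" "b2 \<ge> 0" "b3 \<ge> 0" "c0 \<ge> 0" "c1 \<ge> 0" "c2 \<ge> 0" "c3 \<ge> 0"
  shows "b0*b2*c1*c3 + b1*b3*c0*c2 + b0*b1*c2*c3 + b2*b3*c0*c1 + b0*b3*c1*c2 + b1*b2*c0*c3
    \<le> (b0 + c0) * (b1 + c1) * (b2 + c2) * (b3 + c3)"
proof -
  have "(b0 + c0) * (b1 + c1) * (b2 + c2) * (b3 + c3) =
    (b0*b2*c1*c3 + b1*b3*c0*c2 + b0*b1*c2*c3 + b2*b3*c0*c1 + b0*b3*c1*c2 + b1*b2*c0*c3)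
    + (b0*b1*b2*b3 + c0*c1*c2*c3 + b0*c1*c2*c3 + b1*c0*c2*c3 + b2*c0*c1*c3 + b3*c0*c1*c2
       + b0*b1*b2*c3 + b0*b1*b3*c2 + b0*b2*b3*c1 + b1*b2*b3*c0)"
    by (simp add: algebra_simps)
  moreover have "b0*b1*b2*b3 + c0*c1*c2*c3 + b0*c1*c2*c3 + b1*c0*c2*c3 + b2*c0*c1*c3
       + b3*c0*c1*c2 + b0*b1*b2*c3 + b0*b1*b3*c2 + b0*b2*b3*c1 + b1*b2*b3*c0 \<ge> 0"
    using assms by (intro add_nonneg_nonneg mult_nonneg_nonneg) auto
  ultimately show ?thesis by linarith
qed

text \<open>With \<open>x = b/c = B/C\<close> and \<open>y = b'/c' = B'/C'\<close> this is
  \<open>((1 + x)(1 + y))\<^sup>2 \<ge> (1 + x + y)\<^sup>2 \<ge> 4 (x + y)\<close>.\<close>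
lemma prod_sums_ge_four_cross_terms:
  fixes b c B C b' c' B' C' :: real
  assumes "0 < b" "0 < c" "0 < B" "0 < C" "0 < b'" "0 < c'" "0 < B'" "0 < C'"
    and "b * C = B * c" and "b' * C' = B' * c'"
  shows "4 * (b * C * c' * C' + b' * c * C * C') \<le> (b + c) * (B + C) * (b' + c') * (B' + C')"
proof -
  define x where "x = b / c"
  define y where "y = b' / c'"
  have xy: "b = x * c" "B = x * C" "b' = y * c'" "B' = y * C'" "0 < x" "0 < y"
    using assms by (simp_all add: x_def y_def field_simps)
  define A where "A = c * C * c' * C'"
  have "0 < A" using assms by (simp add: A_def)
  have "4 * (x + y) \<le> (1 + (x + y)) ^ 2"
    using sum_squares_ge_zero[of "1 - (x + y)" 0] by (simp add: power2_eq_square algebra_simps)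
  also have "\<dots> \<le> ((1 + x) * (1 + y)) ^ 2"
    using xy by (intro power_mono) (simp_all add: algebra_simps)
  finally have "A * (4 * (x + y)) \<le> A * ((1 + x) * (1 + y)) ^ 2"
    using \<open>0 < A\<close> by simp
  then show ?thesis unfolding xy(1-4) A_def by (simp add: algebra_simps power2_eq_square)
qed

text \<open>The products \<open>w, w'\<close> are parameters so that relabelled instances apply verbatim.\<close>
lemma paired_prod_sums_gt_or_proportional:
  fixes b0 b1 b2 b3 c0 c1 c2 c3 M w w' :: real
  assumes pos: "0 < b0" "0 < b1" "0 < b2" "0 < b3" "0 < c0" "0 < c1" "0 < c2" "0 < c3"
    and "b0 * b1 * c2 * c3 = b2 * b3 * c0 * c1" and "b0 * b2 * c1 * c3 = b1 * b3 * c0 * c2"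
    and w: "w = b0 * c1 * c2 * c3" and w': "w' = b1 * c0 * c2 * c3"
    and bound: "w = b3 * c0 * c1 * c2 \<Longrightarrow> w \<noteq> w' \<Longrightarrow> M < w + w'"
  shows "4 * M < (b0 + c0) * (b1 + c1) * (b2 + c2) * (b3 + c3)
    \<or> (b0 * c1 = b1 * c0 \<and> b0 * c2 = b2 * c0 \<and> b0 * c3 = b3 * c0)"
proof -
  have "b0 * c3 = b3 * c0 \<and> b1 * c2 = b2 * c1"
    using assms(9,10) pos
    by (intro cross_products_eq_imp_eq) (simp_all add: ac_simps)
  then have r03: "b0 * c3 = b3 * c0" and r12: "b1 * c2 = b2 * c1" by auto
  show ?thesis
  proof (cases "w = w'")
    case True
    then have r01: "b0 * c1 = b1 * c0" using pos by (simp add: w w')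
    then have "b0 * c2 * c1 = b2 * c0 * c1" using r12 by (metis mult.commute mult.assoc)
    then show ?thesis using r01 r03 pos by simp
  next
    case False
    have "w = b3 * c0 * c1 * c2"
      using arg_cong[OF r03, of "\<lambda>x. x * (c1 * c2)"] by (simp add: w ac_simps)
    from bound[OF this False] have "4 * M < 4 * (b0 * c3 * c1 * c2 + b1 * c0 * c3 * c2)"
      by (simp add: w w' ac_simps)
    also have "\<dots> \<le> (b0 + c0) * (b3 + c3) * (b1 + c1) * (b2 + c2)"
      using pos r03 r12 by (intro prod_sums_ge_four_cross_terms) simp_all
    finally show ?thesis by (simp add: ac_simps)
  qed
qed

text \<open>Two pairs \<open>z \<noteq> z'\<close> among the six cross terms already exceed \<open>2 min\<close>; two pairs
  \<open>z = z'\<close> are the situation of \<open>paired_prod_sums_gt_or_proportional\<close> up to relabelling.\<close>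
lemma prod_sums_gt_or_proportional:
  fixes b0 b1 b2 b3 c0 c1 c2 c3 Mp Mq Mr :: real
  assumes pos: "0 < b0" "0 < b1" "0 < b2" "0 < b3" "0 < c0" "0 < c1" "0 < c2" "0 < c3"
    and "0 \<le> Mp" "0 \<le> Mq" "0 \<le> Mr"
    and pair_p: "b0 * b2 * c1 * c3 \<noteq> b1 * b3 * c0 * c2 \<Longrightarrow>
      Mp < b0 * b2 * c1 * c3 + b1 * b3 * c0 * c2"
    and pair_q: "b0 * b1 * c2 * c3 \<noteq> b2 * b3 * c0 * c1 \<Longrightarrow>
      Mq < b0 * b1 * c2 * c3 + b2 * b3 * c0 * c1"
    and pair_r: "b0 * b3 * c1 * c2 \<noteq> b1 * b2 * c0 * c3 \<Longrightarrow>
      Mr < b0 * b3 * c1 * c2 + b1 * b2 * c0 * c3"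
    and single_p: "b0 * c1 * c2 * c3 = b2 * c0 * c1 * c3 \<Longrightarrow>
      b0 * c1 * c2 * c3 \<noteq> b1 * c0 * c2 * c3 \<Longrightarrow> Mp < b0 * c1 * c2 * c3 + b1 * c0 * c2 * c3"
    and single_q: "b0 * c1 * c2 * c3 = b1 * c0 * c2 * c3 \<Longrightarrow>
      b0 * c1 * c2 * c3 \<noteq> b2 * c0 * c1 * c3 \<Longrightarrow> Mq < b0 * c1 * c2 * c3 + b2 * c0 * c1 * c3"
    and single_r: "b0 * c1 * c2 * c3 = b3 * c0 * c1 * c2 \<Longrightarrow>
      b0 * c1 * c2 * c3 \<noteq> b1 * c0 * c2 * c3 \<Longrightarrow> Mr < b0 * c1 * c2 * c3 + b1 * c0 * c2 * c3"
  shows "2 * min Mp (min Mq Mr) < (b0 + c0) * (b1 + c1) * (b2 + c2) * (b3 + c3)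
    \<or> (b0 * c1 = b1 * c0 \<and> b0 * c2 = b2 * c0 \<and> b0 * c3 = b3 * c0)"
proof -
  define N where "N = (b0 + c0) * (b1 + c1) * (b2 + c2) * (b3 + c3)"
  let ?m = "min Mp (min Mq Mr)"
  have m: "?m \<le> Mp" "?m \<le> Mq" "?m \<le> Mr" by simp_all
  have six: "b0*b2*c1*c3 + b1*b3*c0*c2 + b0*b1*c2*c3 + b2*b3*c0*c1 + b0*b3*c1*c2 + b1*b2*c0*c3
      \<le> N"
    unfolding N_def using pos by (intro prod_sums_ge_six_cross_terms) simp_all
  have pos6: "0 < b0*b2*c1*c3" "0 < b1*b3*c0*c2" "0 < b0*b1*c2*c3" "0 < b2*b3*c0*c1"
    "0 < b0*b3*c1*c2" "0 < b1*b2*c0*c3" using pos by simp_all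
  consider "b0 * b2 * c1 * c3 = b1 * b3 * c0 * c2" "b0 * b1 * c2 * c3 = b2 * b3 * c0 * c1"
    | "b0 * b2 * c1 * c3 = b1 * b3 * c0 * c2" "b0 * b3 * c1 * c2 = b1 * b2 * c0 * c3"
    | "b0 * b1 * c2 * c3 = b2 * b3 * c0 * c1" "b0 * b3 * c1 * c2 = b1 * b2 * c0 * c3"
    | "b0 * b2 * c1 * c3 \<noteq> b1 * b3 * c0 * c2" "b0 * b1 * c2 * c3 \<noteq> b2 * b3 * c0 * c1"
    | "b0 * b2 * c1 * c3 \<noteq> b1 * b3 * c0 * c2" "b0 * b3 * c1 * c2 \<noteq> b1 * b2 * c0 * c3"
    | "b0 * b1 * c2 * c3 \<noteq> b2 * b3 * c0 * c1" "b0 * b3 * c1 * c2 \<noteq> b1 * b2 * c0 * c3"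
    by blast
  then have "2 * ?m < N \<or> (b0 * c1 = b1 * c0 \<and> b0 * c2 = b2 * c0 \<and> b0 * c3 = b3 * c0)"
  proof cases
    case 1
    from paired_prod_sums_gt_or_proportional[OF pos 1(2,1) refl refl single_r]
    show ?thesis using \<open>0 \<le> Mr\<close> m(3) unfolding N_def[symmetric] by linarith
  next
    case 2
    have "b0 * b2 * c3 * c1 = b3 * b1 * c0 * c2" using 2(1) by (simp add: ac_simps)
    moreover have "b0 * b3 * c2 * c1 = b2 * b1 * c0 * c3" using 2(2) by (simp add: ac_simps)
    ultimately have "4 * Mq < (b0 + c0) * (b2 + c2) * (b3 + c3) * (b1 + c1)
        \<or> (b0 * c2 = b2 * c0 \<and> b0 * c3 = b3 * c0 \<and> b0 * c1 = b1 * c0)"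
      by (rule paired_prod_sums_gt_or_proportional[OF pos(1,3,4,2,5,7,8,6) _ _ _ _ single_q])
        (simp_all add: ac_simps)
    moreover have "(b0 + c0) * (b2 + c2) * (b3 + c3) * (b1 + c1) = N" by (simp add: N_def ac_simps)
    ultimately show ?thesis using \<open>0 \<le> Mq\<close> m(2) by (simp only:) linarith
  next
    case 3
    have "b0 * b1 * c3 * c2 = b3 * b2 * c0 * c1" using 3(1) by (simp add: ac_simps)
    moreover have "b0 * b3 * c1 * c2 = b1 * b2 * c0 * c3" using 3(2) by (simp add: ac_simps)
    ultimately have "4 * Mp < (b0 + c0) * (b1 + c1) * (b3 + c3) * (b2 + c2)
        \<or> (b0 * c1 = b1 * c0 \<and> b0 * c3 = b3 * c0 \<and> b0 * c2 = b2 * c0)"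
      by (rule paired_prod_sums_gt_or_proportional[OF pos(1,2,4,3,5,6,8,7) _ _ _ _ single_p])
        (simp_all add: ac_simps)
    moreover have "(b0 + c0) * (b1 + c1) * (b3 + c3) * (b2 + c2) = N" by (simp add: N_def ac_simps)
    ultimately show ?thesis using \<open>0 \<le> Mp\<close> m(1) by (simp only:) linarith
  next
    case 4
    show ?thesis using pair_p[OF 4(1)] pair_q[OF 4(2)] six pos6 m by linarith
  next
    case 5
    show ?thesis using pair_p[OF 5(1)] pair_r[OF 5(2)] six pos6 m by linarith
  next
    case 6
    show ?thesis using pair_q[OF 6(1)] pair_r[OF 6(2)] six pos6 m by linarith
  qed
  then show ?thesis by (simp only: N_def)
qed

section \<open>The biquadratic field\<close>

locale biquadratic =
  fixes p q :: nat
  assumes p_pos: "0 < p" and q_pos: "0 < q"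
    and squarefree_p: "squarefree p" and squarefree_q: "squarefree q"
    and independent: "\<forall>a b c d :: rat.
       of_rat a + of_rat b * sqrt (real p) + of_rat c * sqrt (real q)
         + of_rat d * sqrt (real p * real q) = 0 \<longrightarrow> a = 0 \<and> b = 0 \<and> c = 0 \<and> d = 0"
begin

abbreviation K :: "real set" where "K \<equiv> biquad_field p q"
abbreviation O\<^sub>K :: "real set" where "O\<^sub>K \<equiv> ring_of_integers p q"

definition elem :: "rat \<Rightarrow> rat \<Rightarrow> rat \<Rightarrow> rat \<Rightarrow> real" where
  "elem a b c d = of_rat a + of_rat b * sqrt (real p) + of_rat c * sqrt (real q)
     + of_rat d * sqrt (real p * real q)"

lemma in_K_iff: "x \<in> K \<longleftrightarrow> (\<exists>a b c d. x = elem a b c d)"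
  by (auto simp: biquad_field_def elem_def)

lemma elem_in_K [simp]: "elem a b c d \<in> K"
  using in_K_iff by blast

lemma elem_eq_iff [simp]: "elem a b c d = elem a' b' c' d' \<longleftrightarrow> a = a' \<and> b = b' \<and> c = c' \<and> d = d'"
proof
  assume "elem a b c d = elem a' b' c' d'"
  then have "elem (a - a') (b - b') (c - c') (d - d') = 0"
    by (simp add: elem_def of_rat_diff algebra_simps)
  then show "a = a' \<and> b = b' \<and> c = c' \<and> d = d'"
    using independent unfolding elem_def by fastforce
qed simp

lemma elem_add: "elem a b c d + elem a' b' c' d' = elem (a + a') (b + b') (c + c') (d + d')"
  by (simp add: elem_def of_rat_add algebra_simps)

lemma elem_uminus: "- elem a b c d = elem (- a) (- b) (- c) (- d)"
  by (simp add: elem_def of_rat_minus)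

lemma elem_mult: "elem a b c d * elem a' b' c' d' =
   elem (a * a' + of_nat p * b * b' + of_nat q * c * c' + of_nat p * of_nat q * d * d')
      (a * b' + b * a' + of_nat q * (c * d' + d * c'))
      (a * c' + c * a' + of_nat p * (b * d' + d * b'))
      (a * d' + d * a' + b * c' + c * b')"
proof -
  have expand: "(A + B * u + C * v + D * (u * v)) * (A' + B' * u + C' * v + D' * (u * v)) =
     (A * A' + u\<^sup>2 * B * B' + v\<^sup>2 * C * C' + u\<^sup>2 * v\<^sup>2 * D * D')
     + (A * B' + B * A' + v\<^sup>2 * (C * D' + D * C')) * u
     + (A * C' + C * A' + u\<^sup>2 * (B * D' + D * B')) * v
     + (A * D' + D * A' + B * C' + C * B') * (u * v)" for A B C D A' B' C' D' u v :: real
    by (simp add: algebra_simps power2_eq_square)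
  show ?thesis
    unfolding elem_def real_sqrt_mult expand by (simp add: of_rat_add of_rat_mult)
qed

lemma of_rat_eq_elem: "of_rat a = elem a 0 0 0"
  by (simp add: elem_def)

lemma add_in_K [simp]: "x \<in> K \<Longrightarrow> y \<in> K \<Longrightarrow> x + y \<in> K"
  by (metis in_K_iff elem_add)

lemma mult_in_K [simp]: "x \<in> K \<Longrightarrow> y \<in> K \<Longrightarrow> x * y \<in> K"
  by (metis in_K_iff elem_mult)

lemma uminus_in_K [simp]: "x \<in> K \<Longrightarrow> - x \<in> K"
  by (metis in_K_iff elem_uminus)

lemma of_rat_in_K [simp]: "of_rat a \<in> K"
  by (simp add: of_rat_eq_elem)

lemma of_nat_in_K [simp]: "of_nat n \<in> K"
  using of_rat_in_K[of "of_nat n"] by simp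

lemma zero_in_K [simp]: "0 \<in> K" and one_in_K [simp]: "1 \<in> K"
  using of_rat_in_K[of 0] of_rat_in_K[of 1] by simp_all

lemma of_int_in_K [simp]: "of_int n \<in> K"
  using of_rat_in_K[of "of_int n"] by simp

lemma sqrt_p_in_K [simp]: "sqrt (real p) \<in> K"
  using elem_in_K[of 0 1 0 0] by (simp add: elem_def)

lemma sqrt_q_in_K [simp]: "sqrt (real q) \<in> K"
  using elem_in_K[of 0 0 1 0] by (simp add: elem_def)

definition sign :: "bool \<Rightarrow> rat" where "sign u = (if u then -1 else 1)"

lemma sign_simps [simp]: "sign True = -1" "sign False = 1"
  by (simp_all add: sign_def)

text \<open>\<open>aut u v\<close> changes the sign of \<open>\<surd>p\<close> if \<open>u\<close> holds and that of \<open>\<surd>q\<close> if \<open>v\<close> holds;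
  outside \<open>K\<close> its values are irrelevant.\<close>
definition aut :: "bool \<Rightarrow> bool \<Rightarrow> real \<Rightarrow> real" where
  "aut u v x = (THE y. \<exists>a b c d. x = elem a b c d
     \<and> y = elem a (sign u * b) (sign v * c) (sign u * sign v * d))"

abbreviation "\<sigma>\<^sub>p \<equiv> aut True False"
abbreviation "\<sigma>\<^sub>q \<equiv> aut False True"
abbreviation "\<sigma>\<^sub>p\<^sub>q \<equiv> aut True True"

lemma aut_elem [simp]:
  "aut u v (elem a b c d) = elem a (sign u * b) (sign v * c) (sign u * sign v * d)"
  unfolding aut_def by (rule the_equality) auto

lemma aut_in_K [simp]: "x \<in> K \<Longrightarrow> aut u v x \<in> K"
  by (auto simp: in_K_iff)

lemma aut_add [simp]: "x \<in> K \<Longrightarrow> y \<in> K \<Longrightarrow> aut u v (x + y) = aut u v x + aut u v y"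
  by (auto simp: in_K_iff elem_add algebra_simps)

lemma aut_mult [simp]: "x \<in> K \<Longrightarrow> y \<in> K \<Longrightarrow> aut u v (x * y) = aut u v x * aut u v y"
  by (cases u; cases v) (auto simp: in_K_iff elem_mult algebra_simps)

lemma aut_of_rat [simp]: "aut u v (of_rat a) = of_rat a"
  by (simp add: of_rat_eq_elem)

lemma aut_zero [simp]: "aut u v 0 = 0"
  using aut_of_rat[of u v 0] by simp

lemma aut_of_int [simp]: "aut u v (of_int n) = of_int n"
  using aut_of_rat[of u v "of_int n"] by simp

lemma aut_sqrt_p [simp]: "aut u v (sqrt (real p)) = of_rat (sign u) * sqrt (real p)"
  using aut_elem[of u v 0 1 0 0] by (simp add: elem_def)

lemma aut_sqrt_q [simp]: "aut u v (sqrt (real q)) = of_rat (sign v) * sqrt (real q)"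
  using aut_elem[of u v 0 0 1 0] by (simp add: elem_def)

lemma aut_aut [simp]: "x \<in> K \<Longrightarrow> aut u v (aut u' v' x) = aut (u \<noteq> u') (v \<noteq> v') x"
  by (cases u; cases v; cases u'; cases v') (auto simp: in_K_iff)

lemma aut_id [simp]: "x \<in> K \<Longrightarrow> aut False False x = x"
  by (auto simp: in_K_iff)

lemma aut_poly:
  assumes "x \<in> K" and "\<forall>i. coeff P i \<in> \<int>"
  shows "poly P x \<in> K \<and> aut u v (poly P x) = poly P (aut u v x)"
  using assms(2)
proof (induction P)
  case (pCons c P)
  obtain n where "c = of_int n" using pCons.prems by (metis coeff_pCons_0 Ints_cases)
  moreover have "poly P x \<in> K \<and> aut u v (poly P x) = poly P (aut u v x)"
    using pCons by (metis coeff_pCons_Suc)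
  ultimately show ?case using assms(1) by simp
qed simp

lemma algebraic_int_aut:
  assumes "x \<in> K" and "algebraic_int x"
  shows "algebraic_int (aut u v x)"
proof -
  from assms(2) obtain P where P: "lead_coeff P = 1" "\<forall>i. coeff P i \<in> \<int>" "poly P x = 0"
    by (auto elim: algebraic_int.cases)
  then have "poly P (aut u v x) = 0"
    using aut_poly[OF assms(1) P(2), of u v] by simp
  with P show ?thesis by (intro algebraic_int.intros[of P]) auto
qed

lemma ring_of_integers_iff: "x \<in> O\<^sub>K \<longleftrightarrow> x \<in> K \<and> algebraic_int x"
  by (simp add: ring_of_integers_def)

lemma add_in_O [simp]: "x \<in> O\<^sub>K \<Longrightarrow> y \<in> O\<^sub>K \<Longrightarrow> x + y \<in> O\<^sub>K"
  and mult_in_O [simp]: "x \<in> O\<^sub>K \<Longrightarrow> y \<in> O\<^sub>K \<Longrightarrow> x * y \<in> O\<^sub>K"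
  and of_int_in_O [simp]: "of_int n \<in> O\<^sub>K"
  and aut_in_O [simp]: "x \<in> O\<^sub>K \<Longrightarrow> aut u v x \<in> O\<^sub>K"
  by (simp_all add: ring_of_integers_iff algebraic_int_add algebraic_int_mult algebraic_int_aut)

lemma real_embeddingsD:
  assumes "\<sigma> \<in> real_embeddings p q"
  shows "x \<in> K \<Longrightarrow> y \<in> K \<Longrightarrow> \<sigma> (x + y) = \<sigma> x + \<sigma> y"
    and "x \<in> K \<Longrightarrow> y \<in> K \<Longrightarrow> \<sigma> (x * y) = \<sigma> x * \<sigma> y"
    and "\<sigma> 1 = 1" and "x \<notin> K \<Longrightarrow> \<sigma> x = 0"
  using assms by (auto simp: real_embeddings_def)

lemma real_embedding_of_rat:
  assumes "\<sigma> \<in> real_embeddings p q"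
  shows "\<sigma> (of_rat a) = of_rat a"
proof -
  note hom = real_embeddingsD[OF assms]
  have "\<sigma> 0 = 0" using hom(1)[of 0 0] by simp
  have nat: "\<sigma> (of_nat n) = of_nat n" for n
    by (induction n) (use \<open>\<sigma> 0 = 0\<close> hom(1)[of 1] hom(3) in auto)
  have neg: "\<sigma> (- y) = - \<sigma> y" if "y \<in> K" for y
    using hom(1)[OF that uminus_in_K[OF that]] \<open>\<sigma> 0 = 0\<close> by simp
  have int: "\<sigma> (of_int n) = of_int n" for n
  proof (cases "n \<ge> 0")
    case True
    then show ?thesis using nat[of "nat n"] by simp
  next
    case False
    define m where "m = nat (- n)"
    have "of_int n = - (of_nat m :: real)" using False by (simp add: m_def)
    then show ?thesis using neg[of "of_nat m"] nat[of m] by simp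
  qed
  obtain m n where a: "a = of_int m / of_int n" and "n > 0"
    by (metis quotient_of_denom_pos quotient_of_div surj_pair)
  then have an: "of_rat a * of_int n = (of_int m :: real)" by (simp add: of_rat_divide)
  then have "\<sigma> (of_rat a) * of_int n = of_int m"
    using hom(2)[OF of_rat_in_K of_int_in_K, of a n] int by simp
  then have "\<sigma> (of_rat a) * of_int n = of_rat a * of_int n" using an by simp
  then show ?thesis using \<open>n > 0\<close> by simp
qed

lemma real_embedding_square_root:
  assumes "\<sigma> \<in> real_embeddings p q" and "x \<in> K" and "x * x = of_rat c"
  shows "\<sigma> x = x \<or> \<sigma> x = - x"
proof -
  have "\<sigma> x * \<sigma> x = x * x"
    using real_embeddingsD(2)[OF assms(1,2,2)] real_embedding_of_rat[OF assms(1)] assms(3)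
    by simp
  then have "(\<sigma> x - x) * (\<sigma> x + x) = 0" by (simp add: algebra_simps)
  then show ?thesis by (simp add: eq_neg_iff_add_eq_0)
qed

definition emb :: "bool \<Rightarrow> bool \<Rightarrow> real \<Rightarrow> real" where
  "emb u v x = (if x \<in> K then aut u v x else 0)"

lemma emb_in_real_embeddings: "emb u v \<in> real_embeddings p q"
  using aut_of_rat[of u v 1] by (auto simp: real_embeddings_def emb_def)

lemma real_embedding_eq_emb:
  assumes "\<sigma> \<in> real_embeddings p q"
  obtains u v where "\<sigma> = emb u v"
proof -
  note hom = real_embeddingsD[OF assms]
  define u where "u = (\<sigma> (sqrt (real p)) \<noteq> sqrt (real p))"
  define v where "v = (\<sigma> (sqrt (real q)) \<noteq> sqrt (real q))"
  have sqrt_p: "\<sigma> (sqrt (real p)) = of_rat (sign u) * sqrt (real p)"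
    using real_embedding_square_root[OF assms sqrt_p_in_K, of "of_nat p"] by (auto simp: u_def p_pos)
  have sqrt_q: "\<sigma> (sqrt (real q)) = of_rat (sign v) * sqrt (real q)"
    using real_embedding_square_root[OF assms sqrt_q_in_K, of "of_nat q"] by (auto simp: v_def q_pos)
  have "\<sigma> (elem a b c d) = aut u v (elem a b c d)" for a b c d
  proof -
    have "\<sigma> (elem a b c d) = of_rat a + of_rat b * \<sigma> (sqrt (real p))
        + of_rat c * \<sigma> (sqrt (real q)) + of_rat d * (\<sigma> (sqrt (real p)) * \<sigma> (sqrt (real q)))"
      unfolding elem_def real_sqrt_mult by (simp add: hom(1,2) real_embedding_of_rat[OF assms])
    also have "\<dots> = aut u v (elem a b c d)"
      by (simp add: sqrt_p sqrt_q elem_def real_sqrt_mult of_rat_mult mult_ac)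
    finally show ?thesis .
  qed
  then have "\<sigma> x = emb u v x" for x
    using hom(4) by (cases "x \<in> K") (auto simp: emb_def in_K_iff)
  then have "\<sigma> = emb u v" ..
  then show thesis by (rule that)
qed

lemma real_embeddings_eq: "real_embeddings p q = (\<lambda>(u, v). emb u v) ` UNIV"
  using emb_in_real_embeddings by (auto elim!: real_embedding_eq_emb)

lemma inj_emb: "inj (\<lambda>(u, v). emb u v)"
proof (rule injI, clarify)
  fix u v u' v' assume "emb u v = emb u' v'"
  then have "emb u v (elem 0 1 0 0) = emb u' v' (elem 0 1 0 0)"
    "emb u v (elem 0 0 1 0) = emb u' v' (elem 0 0 1 0)" by simp_all
  then show "u = u' \<and> v = v'"
    by (cases u; cases u'; cases v; cases v') (simp_all add: emb_def)
qed

lemma field_norm_eq: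
  assumes "x \<in> K"
  shows "field_norm p q x = x * \<sigma>\<^sub>p x * \<sigma>\<^sub>q x * \<sigma>\<^sub>p\<^sub>q x"
proof -
  have "field_norm p q x = (\<Prod>(u, v)\<in>UNIV. emb u v x)"
    unfolding field_norm_def real_embeddings_eq
    by (subst prod.reindex[OF inj_emb]) (simp add: case_prod_beta)
  also have "(UNIV :: (bool \<times> bool) set) = {(False, False), (True, False), (False, True), (True, True)}"
    by auto
  also have "(\<Prod>(u, v)\<in>\<dots>. emb u v x) = x * \<sigma>\<^sub>p x * \<sigma>\<^sub>q x * \<sigma>\<^sub>p\<^sub>q x"
    using assms by (simp add: emb_def mult_ac)
  finally show ?thesis .
qed

lemma totally_positive_aut: "totally_positive p q x \<Longrightarrow> 0 < aut u v x"
  using emb_in_real_embeddings[of u v] by (auto simp: totally_positive_def emb_def)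

lemma fixed_by_sigma_q:
  assumes "x \<in> K" "\<sigma>\<^sub>q x = x"
  obtains X Y where "x = of_rat X + of_rat Y * sqrt (real p)"
    and "\<sigma>\<^sub>p x = of_rat X - of_rat Y * sqrt (real p)"
proof -
  obtain a b c d where x: "x = elem a b c d" using assms(1) by (auto simp: in_K_iff)
  with assms(2) have "x = elem a b 0 0" "\<sigma>\<^sub>p x = elem a (- b) 0 0" by simp_all
  then show thesis using that[of a b] by (simp add: elem_def of_rat_minus)
qed

lemma fixed_by_sigma_p:
  assumes "x \<in> K" "\<sigma>\<^sub>p x = x"
  obtains X Y where "x = of_rat X + of_rat Y * sqrt (real q)"
    and "\<sigma>\<^sub>q x = of_rat X - of_rat Y * sqrt (real q)"
proof -
  obtain a b c d where x: "x = elem a b c d" using assms(1) by (auto simp: in_K_iff)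
  with assms(2) have "x = elem a 0 c 0" "\<sigma>\<^sub>q x = elem a 0 (- c) 0" by simp_all
  then show thesis using that[of a c] by (simp add: elem_def of_rat_minus)
qed

lemma fixed_by_sigma_pq:
  assumes "x \<in> K" "\<sigma>\<^sub>p\<^sub>q x = x"
  obtains X Y where "x = of_rat X + of_rat Y * sqrt (real p * real q)"
    and "\<sigma>\<^sub>p x = of_rat X - of_rat Y * sqrt (real p * real q)"
proof -
  obtain a b c d where x: "x = elem a b c d" using assms(1) by (auto simp: in_K_iff)
  with assms(2) have "x = elem a 0 0 d" "\<sigma>\<^sub>p x = elem a 0 0 (- d)" by simp_all
  then show thesis using that[of a d] by (simp add: elem_def of_rat_minus)
qed

definition r :: nat where "r = p * q div (gcd p q)\<^sup>2"

lemma squarefree_r: "squarefree r"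
  and sqrt_pq_eq: "sqrt (real p * real q) = real (gcd p q) * sqrt (real r)"
proof -
  define g where "g = gcd p q"
  have "gcd p q \<noteq> 0" using p_pos by simp
  from gcd_coprime_exists[OF this] obtain p' q' where pq: "p = p' * g" "q = q' * g" "coprime p' q'"
    unfolding g_def by blast
  have pq_eq: "p * q = p' * q' * g\<^sup>2" unfolding pq(1,2) by (simp add: power2_eq_square mult_ac)
  moreover have "0 < g" using p_pos by (simp add: g_def)
  ultimately have r: "r = p' * q'" by (simp add: r_def flip: g_def)
  have "real p * real q = real g ^ 2 * real r"
    unfolding r using arg_cong[OF pq_eq, of real] by (simp add: mult_ac)
  then show "sqrt (real p * real q) = real (gcd p q) * sqrt (real r)"
    by (simp add: real_sqrt_mult g_def)
  have "squarefree p'" "squarefree q'"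
    using squarefree_p squarefree_q pq by (metis squarefree_multD(1))+
  then show "squarefree r" unfolding r using pq(3) by (simp add: squarefree_mult_coprime)
qed

lemma trace_gt_sqrt_p:
  assumes "z \<in> O\<^sub>K" "\<sigma>\<^sub>q z = z" "\<sigma>\<^sub>p z \<noteq> z" "0 < z" "0 < \<sigma>\<^sub>p z"
  shows "sqrt (real p) < z + \<sigma>\<^sub>p z"
proof -
  have z: "z \<in> K" "algebraic_int z" "algebraic_int (\<sigma>\<^sub>p z)"
    using assms(1) by (simp_all add: ring_of_integers_iff algebraic_int_aut)
  obtain X Y where XY: "z = of_rat X + of_rat Y * sqrt (real p)"
    "\<sigma>\<^sub>p z = of_rat X - of_rat Y * sqrt (real p)"
    using fixed_by_sigma_q[OF z(1) assms(2)] .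
  with assms(3) have "Y \<noteq> 0" by auto
  then show ?thesis
    using quadratic_trace_gt_sqrt[OF squarefree_p, of Y X] z(2,3) assms(4,5) by (simp flip: XY)
qed

lemma trace_gt_sqrt_q:
  assumes "z \<in> O\<^sub>K" "\<sigma>\<^sub>p z = z" "\<sigma>\<^sub>q z \<noteq> z" "0 < z" "0 < \<sigma>\<^sub>q z"
  shows "sqrt (real q) < z + \<sigma>\<^sub>q z"
proof -
  have z: "z \<in> K" "algebraic_int z" "algebraic_int (\<sigma>\<^sub>q z)"
    using assms(1) by (simp_all add: ring_of_integers_iff algebraic_int_aut)
  obtain X Y where XY: "z = of_rat X + of_rat Y * sqrt (real q)"
    "\<sigma>\<^sub>q z = of_rat X - of_rat Y * sqrt (real q)"
    using fixed_by_sigma_p[OF z(1) assms(2)] .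
  with assms(3) have "Y \<noteq> 0" by auto
  then show ?thesis
    using quadratic_trace_gt_sqrt[OF squarefree_q, of Y X] z(2,3) assms(4,5) by (simp flip: XY)
qed

lemma trace_gt_sqrt_r:
  assumes "z \<in> O\<^sub>K" "\<sigma>\<^sub>p\<^sub>q z = z" "\<sigma>\<^sub>p z \<noteq> z" "0 < z" "0 < \<sigma>\<^sub>p z"
  shows "sqrt (real r) < z + \<sigma>\<^sub>p z"
proof -
  have z: "z \<in> K" "algebraic_int z" "algebraic_int (\<sigma>\<^sub>p z)"
    using assms(1) by (simp_all add: ring_of_integers_iff algebraic_int_aut)
  obtain X Y where "z = of_rat X + of_rat Y * sqrt (real p * real q)"
    "\<sigma>\<^sub>p z = of_rat X - of_rat Y * sqrt (real p * real q)"
    using fixed_by_sigma_pq[OF z(1) assms(2)] .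
  then have XY: "z = of_rat X + of_rat (Y * of_nat (gcd p q)) * sqrt (real r)"
    "\<sigma>\<^sub>p z = of_rat X - of_rat (Y * of_nat (gcd p q)) * sqrt (real r)"
    by (simp_all add: sqrt_pq_eq of_rat_mult)
  with assms(3) have "Y * of_nat (gcd p q) \<noteq> 0" by auto
  then show ?thesis
    using quadratic_trace_gt_sqrt[OF squarefree_r, of "Y * of_nat (gcd p q)" X] z(2,3) assms(4,5)
    by (simp flip: XY)
qed

lemma trace_eq_of_rat:
  assumes "x \<in> K"
  obtains a where "x + \<sigma>\<^sub>p x + \<sigma>\<^sub>q x + \<sigma>\<^sub>p\<^sub>q x = 4 * of_rat a"
proof -
  obtain a b c d where "x = elem a b c d" using assms by (auto simp: in_K_iff)
  then have "x + \<sigma>\<^sub>p x + \<sigma>\<^sub>q x + \<sigma>\<^sub>p\<^sub>q x = elem (4 * a) 0 0 0" by (simp add: elem_add)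
  then show thesis by (intro that[of a]) (simp add: elem_def of_rat_mult)
qed

text \<open>If \<open>\<alpha> = (u/v) \<gamma>\<close> in lowest terms, then \<open>\<alpha>/u = s \<alpha> + t \<gamma>\<close> for a Bezout
  relation \<open>s u + t v = 1\<close>.\<close>
lemma rational_multiple_divisible:
  assumes "\<alpha> \<in> O\<^sub>K" "\<gamma> \<in> O\<^sub>K" "\<alpha> = of_rat e * \<gamma>" "1 < e"
  obtains n :: int where "1 < n" "\<alpha> / of_int n \<in> O\<^sub>K"
proof -
  obtain u v where uv: "quotient_of e = (u, v)" by (cases "quotient_of e")
  have "0 < v" "coprime u v" and e: "e = of_int u / of_int v"
    using quotient_of_denom_pos[OF uv] quotient_of_coprime[OF uv] quotient_of_div[OF uv]
    by auto
  with assms(4) have "v < u" by (simp add: field_simps)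
  obtain s t where st: "s * u + t * v = 1"
    using bezout_int[of u v] \<open>coprime u v\<close> by auto
  have "\<alpha> / of_int u = of_int s * \<alpha> + of_int t * \<gamma>"
  proof -
    have one: "(of_int s * of_int u + of_int t * of_int v :: real) = 1"
      using arg_cong[OF st, of real_of_int] by simp
    have "of_int s * \<alpha> + of_int t * \<gamma>
        = \<gamma> * (of_int s * of_int u + of_int t * of_int v) / of_int v"
      using \<open>0 < v\<close> by (simp add: assms(3) e of_rat_divide field_simps)
    also have "\<dots> = \<alpha> / of_int u"
      using \<open>0 < v\<close> \<open>v < u\<close> by (simp add: one assms(3) e of_rat_divide field_simps)
    finally show ?thesis by simp
  qed
  moreover have "of_int s * \<alpha> + of_int t * \<gamma> \<in> O\<^sub>K" using assms(1,2) by simp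
  ultimately show thesis using \<open>0 < v\<close> \<open>v < u\<close> by (intro that[of u]) simp_all
qed

text \<open>The common ratio \<open>\<beta>/\<gamma>\<close> of all conjugates is the ratio of the traces, hence rational.\<close>
lemma proportional_conjugates_divisible:
  assumes "\<beta> \<in> O\<^sub>K" "\<gamma> \<in> O\<^sub>K" "totally_positive p q \<beta>" "totally_positive p q \<gamma>"
    and "\<beta> * \<sigma>\<^sub>p \<gamma> = \<sigma>\<^sub>p \<beta> * \<gamma>" "\<beta> * \<sigma>\<^sub>q \<gamma> = \<sigma>\<^sub>q \<beta> * \<gamma>"
    and "\<beta> * \<sigma>\<^sub>p\<^sub>q \<gamma> = \<sigma>\<^sub>p\<^sub>q \<beta> * \<gamma>"
  obtains n :: int where "1 < n" "(\<beta> + \<gamma>) / of_int n \<in> O\<^sub>K"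
proof -
  have K: "\<beta> \<in> K" "\<gamma> \<in> K" using assms(1,2) by (simp_all add: ring_of_integers_iff)
  obtain a where a: "\<beta> + \<sigma>\<^sub>p \<beta> + \<sigma>\<^sub>q \<beta> + \<sigma>\<^sub>p\<^sub>q \<beta> = 4 * of_rat a"
    using trace_eq_of_rat[OF K(1)] .
  obtain c where c: "\<gamma> + \<sigma>\<^sub>p \<gamma> + \<sigma>\<^sub>q \<gamma> + \<sigma>\<^sub>p\<^sub>q \<gamma> = 4 * of_rat c"
    using trace_eq_of_rat[OF K(2)] .
  have pos: "0 < aut u v \<beta>" "0 < aut u v \<gamma>" for u v
    using assms(3,4) by (simp_all add: totally_positive_aut)
  then have "0 < \<beta>" "0 < \<gamma>" using pos[of False False] K by simp_all
  have "(0 :: real) < of_rat c"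
    using c pos[of True False] pos[of False True] pos[of True True] \<open>0 < \<gamma>\<close> by linarith
  then have "0 < c" by simp
  have "\<beta> * (4 * of_rat c) = \<gamma> * (4 * of_rat a)"
    unfolding a[symmetric] c[symmetric] using assms(5-7) by (simp add: algebra_simps)
  then have \<beta>: "\<beta> = of_rat (a / c) * \<gamma>"
    using \<open>0 < c\<close> by (simp add: of_rat_divide field_simps)
  with \<open>0 < \<beta>\<close> \<open>0 < \<gamma>\<close> have "0 < a / c" by (simp add: zero_less_mult_iff)
  have "\<beta> + \<gamma> = of_rat (a / c + 1) * \<gamma>" by (simp add: \<beta> of_rat_add algebra_simps)
  moreover have "1 < a / c + 1" using \<open>0 < a / c\<close> by simp
  moreover have "\<beta> + \<gamma> \<in> O\<^sub>K" using assms(1,2) by simp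
  ultimately show thesis using rational_multiple_divisible assms(2) that by blast
qed

lemma norm_add_gt_or_proportional:
  assumes "\<beta> \<in> O\<^sub>K" "\<gamma> \<in> O\<^sub>K" "totally_positive p q \<beta>" "totally_positive p q \<gamma>"
  shows "2 * min (sqrt (real p)) (min (sqrt (real q)) (sqrt (real r))) < field_norm p q (\<beta> + \<gamma>)
    \<or> (\<beta> * \<sigma>\<^sub>p \<gamma> = \<sigma>\<^sub>p \<beta> * \<gamma> \<and> \<beta> * \<sigma>\<^sub>q \<gamma> = \<sigma>\<^sub>q \<beta> * \<gamma>
       \<and> \<beta> * \<sigma>\<^sub>p\<^sub>q \<gamma> = \<sigma>\<^sub>p\<^sub>q \<beta> * \<gamma>)"
proof -
  have K [simp]: "\<beta> \<in> K" "\<gamma> \<in> K" using assms(1,2) by (simp_all add: ring_of_integers_iff)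
  note O [simp] = assms(1,2)
  have pos: "0 < aut u v \<beta>" "0 < aut u v \<gamma>" for u v
    using assms(3,4) by (simp_all add: totally_positive_aut)
  have nonzero: "aut u v \<beta> \<noteq> 0" "aut u v \<gamma> \<noteq> 0" for u v
    using pos[of u v] by auto
  have pos8: "0 < \<beta>" "0 < \<sigma>\<^sub>p \<beta>" "0 < \<sigma>\<^sub>q \<beta>" "0 < \<sigma>\<^sub>p\<^sub>q \<beta>"
    "0 < \<gamma>" "0 < \<sigma>\<^sub>p \<gamma>" "0 < \<sigma>\<^sub>q \<gamma>" "0 < \<sigma>\<^sub>p\<^sub>q \<gamma>"
    using pos[of False False] pos by simp_all
  note sqrt_nonneg = of_nat_0_le_iff[THEN real_sqrt_ge_zero]
  have trace_p: "sqrt (real p) < z + z'"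
    if "z \<in> O\<^sub>K" "\<sigma>\<^sub>q z = z" "\<sigma>\<^sub>p z = z'" "z \<noteq> z'" "0 < z" "0 < z'" for z z'
    using trace_gt_sqrt_p[of z] that by simp
  have trace_q: "sqrt (real q) < z + z'"
    if "z \<in> O\<^sub>K" "\<sigma>\<^sub>p z = z" "\<sigma>\<^sub>q z = z'" "z \<noteq> z'" "0 < z" "0 < z'" for z z'
    using trace_gt_sqrt_q[of z] that by simp
  have trace_r: "sqrt (real r) < z + z'"
    if "z \<in> O\<^sub>K" "\<sigma>\<^sub>p\<^sub>q z = z" "\<sigma>\<^sub>p z = z'" "z \<noteq> z'" "0 < z" "0 < z'" for z z'
    using trace_gt_sqrt_r[of z] that by simp
  have "field_norm p q (\<beta> + \<gamma>)
      = (\<beta> + \<gamma>) * (\<sigma>\<^sub>p \<beta> + \<sigma>\<^sub>p \<gamma>) * (\<sigma>\<^sub>q \<beta> + \<sigma>\<^sub>q \<gamma>) * (\<sigma>\<^sub>p\<^sub>q \<beta> + \<sigma>\<^sub>p\<^sub>q \<gamma>)"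
    by (simp add: field_norm_eq)
  moreover have "2 * min (sqrt (real p)) (min (sqrt (real q)) (sqrt (real r)))
      < (\<beta> + \<gamma>) * (\<sigma>\<^sub>p \<beta> + \<sigma>\<^sub>p \<gamma>) * (\<sigma>\<^sub>q \<beta> + \<sigma>\<^sub>q \<gamma>) * (\<sigma>\<^sub>p\<^sub>q \<beta> + \<sigma>\<^sub>p\<^sub>q \<gamma>)
    \<or> (\<beta> * \<sigma>\<^sub>p \<gamma> = \<sigma>\<^sub>p \<beta> * \<gamma> \<and> \<beta> * \<sigma>\<^sub>q \<gamma> = \<sigma>\<^sub>q \<beta> * \<gamma>
       \<and> \<beta> * \<sigma>\<^sub>p\<^sub>q \<gamma> = \<sigma>\<^sub>p\<^sub>q \<beta> * \<gamma>)"
    \<comment> \<open>Each bound is a trace estimate for a product of conjugates that is fixed by one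
      automorphism and moved by another.\<close>
    apply (rule prod_sums_gt_or_proportional[OF pos8 sqrt_nonneg sqrt_nonneg sqrt_nonneg])
    subgoal by (rule trace_p) (simp_all add: mult_ac pos8)
    subgoal by (rule trace_q) (simp_all add: mult_ac pos8)
    subgoal by (rule trace_r) (simp_all add: mult_ac pos8)
    subgoal premises fixed
      by (rule trace_p, simp, use fixed(1) in \<open>simp add: mult_ac nonzero\<close>)
        (use fixed(2) in \<open>simp_all add: mult_ac pos8 nonzero\<close>)
    subgoal premises fixed
      by (rule trace_q, simp, use fixed(1) in \<open>simp add: mult_ac nonzero\<close>)
        (use fixed(2) in \<open>simp_all add: mult_ac pos8 nonzero\<close>)
    subgoal premises fixed
      by (rule trace_r, simp, use fixed(1) in \<open>simp add: mult_ac nonzero\<close>)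
        (use fixed(2) in \<open>simp_all add: mult_ac pos8 nonzero\<close>)
    done
  ultimately show ?thesis by simp
qed

end

theorem proposition4:
  fixes p q :: nat and \<alpha> :: real
  assumes "p > 0" and "q > 0" and "squarefree p" and "squarefree q"
    and deg4: "\<forall>a b c d :: rat.
       of_rat a + of_rat b * sqrt (real p) + of_rat c * sqrt (real q)
         + of_rat d * sqrt (real p * real q) = 0 \<longrightarrow> a = 0 \<and> b = 0 \<and> c = 0 \<and> d = 0"
    and "\<alpha> \<in> ring_of_integers p q"
    and "totally_positive p q \<alpha>"
    and "field_norm p q \<alpha> <
           2 * min (sqrt (real p)) (min (sqrt (real q))
                 (sqrt (real (p * q div (gcd p q)^2))))"
    and "\<forall>n :: int. n > 1 \<longrightarrow> \<alpha> / of_int n \<notin> ring_of_integers p q"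
  shows "indecomposable p q \<alpha>"
proof -
  interpret biquadratic p q by unfold_locales (use assms(1-5) in auto)
  have False if decomp: "\<beta> \<in> O\<^sub>K" "\<gamma> \<in> O\<^sub>K" "totally_positive p q \<beta>"
    "totally_positive p q \<gamma>" "\<alpha> = \<beta> + \<gamma>" for \<beta> \<gamma>
  proof -
    have "\<not> 2 * min (sqrt (real p)) (min (sqrt (real q)) (sqrt (real r))) < field_norm p q \<alpha>"
      using assms(8) unfolding r_def by linarith
    then obtain n :: int where "1 < n" "\<alpha> / of_int n \<in> O\<^sub>K"
      using norm_add_gt_or_proportional[OF decomp(1-4)]
        proportional_conjugates_divisible[OF decomp(1-4)] decomp(5) by blast
    with assms(9) show False by blast
  qed
  then show ?thesis using assms(6,7) unfolding indecomposable_def by blast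
qed

end
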